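(* Fix $T>0$ and a continuous $h>0$ on $[0,T]$, and assume that for every boundary function $s$ on $[0,T]$ the Fixed Boundary Neumann Problem with flux $h$ has a solution $U^s$. Let $\mathcal{R}$ be the Neumann boundary-update operator and $\mathcal{P}^{1/2}(s)=\tfrac12\mathcal{R}(s)+\tfrac12 s$. Let $s^*$ be a boundary function with $\mathcal{R}(s^* )=s^*$ (i.e. $s^*$ is the free boundary of the solution of the Stefan problem with this Neumann condition). If $s$ is a boundary function with $s(t)\le s^*(t)$ for all $t\in[0,T]$, then for all $t\in[0,T]$ $$s-s^*\le \frac{s-s^*}{2}\le \mathcal{P}^{1/2}(s)-s^*\le \frac{\mathcal{R}(s)-s^*}{2}\le \mathcal{R}(s)-s^*.$$ If instead $s(t)\ge s^*(t)$ for all $t\in[0,T]$, then for all $t\in[0,T]$ $$s-s^*\ge \frac{s-s^*}{2}\ge \mathcal{P}^{1/2}(s)-s^*\ge \frac{\mathcal{R}(s)-s^*}{2}\ge \mathcal{R}(s)-s^*.$$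
   Context: A boundary function on $[0,T]$ is a function $s\in C([0,T])\cap C^1((0,T])$ with $s(0)=0$ and $s(t)>0$ for $t\in(0,T]$. For such $s$ let $Q_{s,T}=\{(x,t):0<x<s(t),\,0<t<T\}$. The Fixed Boundary Neumann Problem on $s$ with flux $h$ asks for $U\in C(\overline{Q_{s,T}})\cap C^{2,1}(Q_{s,T})$ with $U_x$ continuous on $\overline{Q_{s,T}}\setminus\{t=0\}$ such that $U_t=U_{xx}$ in $Q_{s,T}$, $U(0,0)=0$, $U(s(t),t)=0$, and $-U_x(0,t)=h(t)$; its solution is $U^s$. The Neumann boundary-update operator is $\mathcal{R}(s)(t)=\int_0^t h(z)\,dz-\int_0^{s(t)}U^s(x,t)\,dx$ for $0\le t\le T$. *)

theory Defs
  imports "HOL-Analysis.Analysis"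
begin

definition boundary_fn :: "real \<Rightarrow> (real \<Rightarrow> real) \<Rightarrow> bool" where
  "boundary_fn T s \<longleftrightarrow>
     continuous_on {0..T} s \<and>
     (\<exists>s'. (\<forall>t\<in>{0<..T}. (s has_real_derivative s' t) (at t within {0<..T}))
           \<and> continuous_on {0<..T} s') \<and>
     s 0 = 0 \<and> (\<forall>t\<in>{0<..T}. s t > 0)"

definition Qdom :: "real \<Rightarrow> (real \<Rightarrow> real) \<Rightarrow> (real \<times> real) set" where
  "Qdom T s = {(x,t). 0 < t \<and> t < T \<and> 0 < x \<and> x < s t}"

definition Qclos :: "real \<Rightarrow> (real \<Rightarrow> real) \<Rightarrow> (real \<times> real) set" where
  "Qclos T s = {(x,t). 0 \<le> t \<and> t \<le> T \<and> 0 \<le> x \<and> x \<le> s t}"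

definition neumann_sol :: "real \<Rightarrow> (real \<Rightarrow> real) \<Rightarrow> (real \<Rightarrow> real) \<Rightarrow> (real \<Rightarrow> real \<Rightarrow> real) \<Rightarrow> bool" where
  "neumann_sol T h s U \<longleftrightarrow>
     continuous_on (Qclos T s) (\<lambda>(x,t). U x t) \<and>
     (\<exists>Ux Uxx Ut.
        (\<forall>(x,t)\<in>Qdom T s.
            ((\<lambda>y. U y t) has_real_derivative Ux x t) (at x) \<and>
            ((\<lambda>y. Ux y t) has_real_derivative Uxx x t) (at x) \<and>
            ((\<lambda>\<tau>. U x \<tau>) has_real_derivative Ut x t) (at t) \<and>
            Ut x t = Uxx x t) \<and>
        continuous_on (Qdom T s) (\<lambda>(x,t). Uxx x t) \<and>
        continuous_on (Qdom T s) (\<lambda>(x,t). Ut x t) \<and>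
        (\<forall>(x,t)\<in>Qclos T s - {(x,t). t = 0}.
            ((\<lambda>y. U y t) has_real_derivative Ux x t) (at x within {0..s t})) \<and>
        continuous_on (Qclos T s - {(x,t). t = 0}) (\<lambda>(x,t). Ux x t) \<and>
        (\<forall>t\<in>{0<..T}. - Ux 0 t = h t)) \<and>
     U 0 0 = 0 \<and>
     (\<forall>t\<in>{0..T}. U (s t) t = 0)"

text \<open>Neumann boundary-update operator, given the choice U s = U^s of solutions.\<close>
definition nbu :: "(real \<Rightarrow> real) \<Rightarrow> ((real \<Rightarrow> real) \<Rightarrow> real \<Rightarrow> real \<Rightarrow> real)
                   \<Rightarrow> (real \<Rightarrow> real) \<Rightarrow> real \<Rightarrow> real" where
  "nbu h U s t = integral {0..t} h - integral {0..s t} (\<lambda>x. U s x t)"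

end

theory Submission
  imports Defs
begin

text \<open>The update operator is antitone: \<open>s\<^sub>1 \<le> s\<^sub>2\<close> implies \<open>R(s\<^sub>2) \<le> R(s\<^sub>1)\<close>.
  This comes from a weak minimum principle for the heat equation on the region under a
  boundary curve, in which the flux condition \<open>-U\<^sub>x(0,t) = h(t) > 0\<close> rules out minima on the
  side \<open>x = 0\<close>. Applied to \<open>U\<^sup>s\<close> it gives \<open>U\<^sup>s \<ge> 0\<close>; applied to the difference of the two
  solutions plus \<open>\<epsilon>(L - x)\<close> it gives \<open>U\<^sup>s\<^sup>1 \<le> U\<^sup>s\<^sup>2\<close> on the smaller region, hence the integral
  of \<open>U\<^sup>s\<^sup>1\<close> over \<open>[0, s\<^sub>1(t)]\<close> is at most that of \<open>U\<^sup>s\<^sup>2\<close> over \<open>[0, s\<^sub>2(t)]\<close>. Since \<open>R(s\<^sup>*) = s\<^sup>*\<close>,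
  \<open>s \<le> s\<^sup>*\<close> forces \<open>R(s) \<ge> s\<^sup>*\<close> (and symmetrically), after which both chains are arithmetic.\<close>

definition solves_heat_on :: "(real \<times> real) set \<Rightarrow> (real \<Rightarrow> real \<Rightarrow> real) \<Rightarrow> bool" where
  "solves_heat_on Q V \<longleftrightarrow>
     (\<exists>Vx Vxx Vt. \<forall>(x,t)\<in>Q.
        ((\<lambda>y. V y t) has_real_derivative Vx x t) (at x) \<and>
        ((\<lambda>y. Vx y t) has_real_derivative Vxx x t) (at x) \<and>
        ((\<lambda>\<tau>. V x \<tau>) has_real_derivative Vt x t) (at t) \<and> Vt x t = Vxx x t)"

lemma solves_heat_on_subset: "solves_heat_on Q V \<Longrightarrow> Q' \<subseteq> Q \<Longrightarrow> solves_heat_on Q' V"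
  unfolding solves_heat_on_def by blast

lemma solves_heat_on_diff_affine:
  assumes "solves_heat_on Q U" and "solves_heat_on Q W"
  shows "solves_heat_on Q (\<lambda>x t. W x t - U x t + c * x + d)"
proof -
  obtain Ux Uxx Ut where U: "\<forall>(x,t)\<in>Q.
      ((\<lambda>y. U y t) has_real_derivative Ux x t) (at x) \<and>
      ((\<lambda>y. Ux y t) has_real_derivative Uxx x t) (at x) \<and>
      ((\<lambda>\<tau>. U x \<tau>) has_real_derivative Ut x t) (at t) \<and> Ut x t = Uxx x t"
    using assms(1) unfolding solves_heat_on_def by blast
  obtain Wx Wxx Wt where W: "\<forall>(x,t)\<in>Q.
      ((\<lambda>y. W y t) has_real_derivative Wx x t) (at x) \<and>
      ((\<lambda>y. Wx y t) has_real_derivative Wxx x t) (at x) \<and>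
      ((\<lambda>\<tau>. W x \<tau>) has_real_derivative Wt x t) (at t) \<and> Wt x t = Wxx x t"
    using assms(2) unfolding solves_heat_on_def by blast
  have "\<forall>(x,t)\<in>Q.
      ((\<lambda>y. W y t - U y t + c * y + d) has_real_derivative Wx x t - Ux x t + c) (at x) \<and>
      ((\<lambda>y. Wx y t - Ux y t + c) has_real_derivative Wxx x t - Uxx x t) (at x) \<and>
      ((\<lambda>\<tau>. W x \<tau> - U x \<tau> + c * x + d) has_real_derivative Wt x t - Ut x t) (at t) \<and>
      Wt x t - Ut x t = Wxx x t - Uxx x t"
    using U W by (fastforce intro!: derivative_eq_intros)
  then show ?thesis
    unfolding solves_heat_on_def
    by (intro exI[of _ "\<lambda>x t. Wx x t - Ux x t + c"] exI[of _ "\<lambda>x t. Wxx x t - Uxx x t"]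
        exI[of _ "\<lambda>x t. Wt x t - Ut x t"])
qed

lemma DERIV_nonpos_at_left_min:
  fixes g :: "real \<Rightarrow> real"
  assumes "(g has_real_derivative D) (at t)" and "eventually (\<lambda>\<tau>. g t \<le> g \<tau>) (at_left t)"
  shows "D \<le> 0"
proof (rule ccontr)
  assume "\<not> D \<le> 0"
  then obtain d where "0 < d" and d: "\<forall>h>0. h < d \<longrightarrow> g (t - h) < g t"
    using has_real_derivative_pos_inc_left[OF assms(1)] by force
  have "eventually (\<lambda>\<tau>. \<tau> \<in> {t - d<..<t}) (at_left t)"
    using eventually_at_left_real \<open>0 < d\<close> by simp
  then have "eventually (\<lambda>\<tau>. g \<tau> < g t) (at_left t)"
  proof eventually_elim
    case (elim \<tau>)
    then show ?case using d[rule_format, of "t - \<tau>"] by auto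
  qed
  with assms(2) have "eventually (\<lambda>_. False) (at_left t)"
    by eventually_elim simp
  then show False by simp
qed

lemma DERIV2_nonneg_at_min:
  fixes f f' :: "real \<Rightarrow> real"
  assumes "a < x" "x < b"
    and f': "\<forall>y\<in>{a<..<b}. (f has_real_derivative f' y) (at y)"
    and f'': "(f' has_real_derivative D) (at x)"
    and min: "\<forall>y\<in>{a<..<b}. f x \<le> f y"
  shows "0 \<le> D"
proof (rule ccontr)
  assume "\<not> 0 \<le> D"
  then obtain d where "0 < d" and d: "\<forall>h>0. h < d \<longrightarrow> f' (x + h) < f' x"
    using has_real_derivative_neg_dec_right[OF f''] by force
  have "(f has_real_derivative f' x) (at x)" using f' assms by simp
  then have "f' x = 0"
    by (rule DERIV_local_min[where d="min (x - a) (b - x)"]) (use min assms in \<open>auto simp: abs_less_iff\<close>)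
  define h where "h = min d (b - x) / 2"
  have h: "0 < h" "h < d" "x + h < b"
    unfolding h_def using \<open>0 < d\<close> assms by (auto simp: min_def field_simps)
  obtain z where z: "x < z" "z < x + h" "f (x + h) - f x = h * f' z"
    using MVT2[of x "x + h" f f'] h f' assms by fastforce
  have "f' z < 0"
    using d[rule_format, of "z - x"] z h \<open>f' x = 0\<close> by auto
  then have "h * f' z < 0" using h(1) by (rule mult_pos_neg[rotated])
  with z(3) have "f (x + h) < f x" by simp
  moreover have "f x \<le> f (x + h)" using min h assms by simp
  ultimately show False by simp
qed

lemma DERIV_neg_left_endpoint_not_min:
  fixes f :: "real \<Rightarrow> real"
  assumes "(f has_real_derivative D) (at a within {a..b})" "D < 0" "a < b"
  shows "\<exists>y\<in>{a..b}. f y < f a"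
proof -
  obtain d where "0 < d" and d: "\<forall>h>0. a + h \<in> {a..b} \<longrightarrow> h < d \<longrightarrow> f (a + h) < f a"
    using has_real_derivative_neg_dec_right[OF assms(1,2)] by force
  define h where "h = min d (b - a) / 2"
  have "0 < h" "h < d" "a + h \<in> {a..b}"
    unfolding h_def using \<open>0 < d\<close> assms(3) by (auto simp: min_def field_simps)
  with d show ?thesis by blast
qed

lemma compact_region_below_graph:
  fixes r :: "real \<Rightarrow> real"
  assumes "continuous_on {a..b} r" and "\<forall>t\<in>{a..b}. 0 \<le> r t"
  shows "compact {(x,t). a \<le> t \<and> t \<le> b \<and> 0 \<le> x \<and> x \<le> r t}"
proof -
  let ?g = "\<lambda>(u, t). (u * r t, t)"
  have "continuous_on ({0..1} \<times> {a..b}) ?g"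
    unfolding case_prod_beta
    by (intro continuous_intros continuous_on_compose2[OF assms(1)]) auto
  then have "compact (?g ` ({0..1} \<times> {a..b}))"
    by (intro compact_continuous_image compact_Times) auto
  moreover have "?g ` ({0..1} \<times> {a..b}) = {(x,t). a \<le> t \<and> t \<le> b \<and> 0 \<le> x \<and> x \<le> r t}"
  proof (intro equalityI subsetI)
    fix p assume "p \<in> ?g ` ({0..1} \<times> {a..b})"
    with assms(2) show "p \<in> {(x,t). a \<le> t \<and> t \<le> b \<and> 0 \<le> x \<and> x \<le> r t}"
      by (auto simp: mult_left_le_one_le)
  next
    fix p assume "p \<in> {(x,t). a \<le> t \<and> t \<le> b \<and> 0 \<le> x \<and> x \<le> r t}"
    then obtain x t where p: "p = (x, t)" "a \<le> t" "t \<le> b" "0 \<le> x" "x \<le> r t" by auto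
    show "p \<in> ?g ` ({0..1} \<times> {a..b})"
    proof (cases "r t = 0")
      case True
      then show ?thesis using p by (intro image_eqI[where x="(0, t)"]) auto
    next
      case False
      then show ?thesis using p by (intro image_eqI[where x="(x / r t, t)"]) auto
    qed
  qed
  ultimately show ?thesis by simp
qed

text \<open>The minimum of \<open>V + \<delta> t\<close> over the region up to time \<open>t\<^sub>0 < T\<close> lies on the parabolic
  boundary: at an interior point the heat equation would give \<open>\<delta> \<le> V\<^sub>x\<^sub>x - V\<^sub>t = 0\<close>, and the
  negative outward derivative excludes the side \<open>x = 0\<close>.\<close>

lemma heat_perturbed_no_interior_min:
  fixes V :: "real \<Rightarrow> real \<Rightarrow> real"
  assumes heat: "solves_heat_on Q V" and Q: "\<forall>y\<in>{a<..<b}. (y, t) \<in> Q"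
    and x: "a < x" "x < b" and "0 < \<delta>"
    and space_min: "\<forall>y\<in>{a<..<b}. V x t \<le> V y t"
    and time_min: "eventually (\<lambda>\<tau>. V x t + \<delta> * t \<le> V x \<tau> + \<delta> * \<tau>) (at_left t)"
  shows False
proof -
  obtain Vx Vxx Vt where d: "\<forall>(x,t)\<in>Q.
      ((\<lambda>y. V y t) has_real_derivative Vx x t) (at x) \<and>
      ((\<lambda>y. Vx y t) has_real_derivative Vxx x t) (at x) \<and>
      ((\<lambda>\<tau>. V x \<tau>) has_real_derivative Vt x t) (at t) \<and> Vt x t = Vxx x t"
    using heat unfolding solves_heat_on_def by blast
  have at_x: "(x, t) \<in> Q" using Q x by auto
  have "0 \<le> Vxx x t"
    by (rule DERIV2_nonneg_at_min[of a x b "\<lambda>y. V y t" "\<lambda>y. Vx y t"])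
      (use d Q x space_min at_x in fastforce)+
  moreover have "Vt x t + \<delta> \<le> 0"
    by (rule DERIV_nonpos_at_left_min[OF _ time_min])
      (use d at_x in \<open>fastforce intro!: derivative_eq_intros\<close>)
  moreover have "Vt x t = Vxx x t" using d at_x by fastforce
  ultimately show False using \<open>0 < \<delta>\<close> by simp
qed

lemma heat_perturbed_nonneg:
  fixes V :: "real \<Rightarrow> real \<Rightarrow> real" and r :: "real \<Rightarrow> real"
  assumes t0: "0 \<le> t0" "t0 < T" and "0 < \<delta>"
    and r: "continuous_on {0..T} r" "\<forall>t\<in>{0..T}. 0 \<le> r t"
    and cont: "continuous_on (Qclos T r) (\<lambda>(x,t). V x t)"
    and heat: "solves_heat_on (Qdom T r) V"
    and outflow: "\<forall>t\<in>{0<..T}. \<exists>D<0. ((\<lambda>y. V y t) has_real_derivative D) (at 0 within {0..r t})"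
    and initial: "\<forall>x\<in>{0..r 0}. 0 \<le> V x 0"
    and lateral: "\<forall>t\<in>{0..T}. 0 \<le> V (r t) t"
    and x: "0 \<le> x" "x \<le> r t0"
  shows "0 \<le> V x t0 + \<delta> * t0"
proof -
  define K where "K = {(x,t). 0 \<le> t \<and> t \<le> t0 \<and> 0 \<le> x \<and> x \<le> r t}"
  define f where "f p = V (fst p) (snd p) + \<delta> * snd p" for p
  have KQ: "K \<subseteq> Qclos T r" using t0 unfolding K_def Qclos_def by auto
  have "compact K"
    unfolding K_def using t0 r
    by (intro compact_region_below_graph continuous_on_subset[OF r(1)]) auto
  moreover have "continuous_on K f"
    unfolding f_def using continuous_on_subset[OF cont KQ]
    by (intro continuous_intros) (simp add: case_prod_beta)
  moreover have x_in: "(x, t0) \<in> K" using x t0 unfolding K_def by auto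
  ultimately obtain xm tm where m: "(xm, tm) \<in> K" and min: "\<forall>q\<in>K. f (xm, tm) \<le> f q"
    using continuous_attains_inf[of K f] by fastforce
  have m': "0 \<le> tm" "tm \<le> t0" "0 \<le> xm" "xm \<le> r tm" using m unfolding K_def by auto
  have "0 \<le> f (xm, tm)"
  proof (rule ccontr)
    assume neg: "\<not> 0 \<le> f (xm, tm)"
    have "0 < tm"
      using neg initial m' by (cases "tm = 0") (auto simp: f_def)
    have "xm < r tm"
      using neg lateral m' t0 \<open>0 < \<delta>\<close> \<open>0 < tm\<close> by (cases "xm = r tm") (auto simp: f_def)
    have tm: "tm \<in> {0<..T}" using \<open>0 < tm\<close> m' t0 by auto
    have "0 < xm"
    proof (rule ccontr)
      assume "\<not> 0 < xm"
      then have "xm = 0" using m' by simp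
      obtain D where "D < 0" "((\<lambda>y. V y tm) has_real_derivative D) (at 0 within {0..r tm})"
        using outflow tm by blast
      then obtain y where "y \<in> {0..r tm}" "V y tm < V 0 tm"
        using DERIV_neg_left_endpoint_not_min \<open>xm < r tm\<close> \<open>xm = 0\<close> by blast
      with min m' \<open>xm = 0\<close> show False by (force simp: K_def f_def)
    qed
    have "continuous_on {0..tm} r"
      using continuous_on_subset[OF r(1)] tm by auto
    then have "(r \<longlongrightarrow> r tm) (at_left tm)"
      using continuous_on_Icc_at_leftD \<open>0 < tm\<close> by blast
    then have "eventually (\<lambda>\<tau>. xm < r \<tau>) (at_left tm)"
      using \<open>xm < r tm\<close> by (rule order_tendstoD)
    then have "eventually (\<lambda>\<tau>. f (xm, tm) \<le> f (xm, \<tau>)) (at_left tm)"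
      using eventually_at_left_real[OF \<open>0 < tm\<close>]
    proof eventually_elim
      case (elim \<tau>)
      then show ?case using min m' \<open>0 < xm\<close> by (auto simp: K_def)
    qed
    moreover have "\<forall>y\<in>{0<..<r tm}. V xm tm \<le> V y tm"
    proof
      fix y assume "y \<in> {0<..<r tm}"
      then have "(y, tm) \<in> K" using m' unfolding K_def by auto
      then show "V xm tm \<le> V y tm" using min by (auto simp: f_def)
    qed
    moreover have "\<forall>y\<in>{0<..<r tm}. (y, tm) \<in> Qdom T r"
      using tm m' t0 by (auto simp: Qdom_def)
    ultimately show False
      using heat_perturbed_no_interior_min[OF heat] \<open>0 < xm\<close> \<open>xm < r tm\<close> \<open>0 < \<delta>\<close>
      by (auto simp: f_def)
  qed
  then show ?thesis using min x_in unfolding f_def by force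
qed

theorem heat_min_principle:
  fixes V :: "real \<Rightarrow> real \<Rightarrow> real" and r :: "real \<Rightarrow> real"
  assumes r: "continuous_on {0..T} r" "\<forall>t\<in>{0..T}. 0 \<le> r t"
    and cont: "continuous_on (Qclos T r) (\<lambda>(x,t). V x t)"
    and heat: "solves_heat_on (Qdom T r) V"
    and outflow: "\<forall>t\<in>{0<..T}. \<exists>D<0. ((\<lambda>y. V y t) has_real_derivative D) (at 0 within {0..r t})"
    and initial: "\<forall>x\<in>{0..r 0}. 0 \<le> V x 0"
    and lateral: "\<forall>t\<in>{0..T}. 0 \<le> V (r t) t"
    and xt: "(x, t) \<in> Qclos T r"
  shows "0 \<le> V x t"
proof -
  have before_T: "0 \<le> V x t" if "0 \<le> t" "t < T" "0 \<le> x" "x \<le> r t" for x t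
  proof (rule field_le_epsilon)
    fix e :: real assume "0 < e"
    have "0 \<le> V x t + e / (t + 1) * t"
      by (rule heat_perturbed_nonneg[OF _ _ _ r cont heat outflow initial lateral])
        (use that \<open>0 < e\<close> in auto)
    also have "\<dots> \<le> V x t + e"
      using that \<open>0 < e\<close> by (simp add: field_simps)
    finally show "0 \<le> V x t + e" by simp
  qed
  consider "t < T" | "t = 0" | "x = r t" | "0 < t" "t = T" "x < r T"
    using xt unfolding Qclos_def by force
  then show ?thesis
  proof cases
    case 1
    then show ?thesis using before_T xt unfolding Qclos_def by auto
  next
    case 2
    then show ?thesis using initial xt unfolding Qclos_def by auto
  next
    case 3
    then show ?thesis using lateral xt unfolding Qclos_def by auto
  next
    case 4
    text \<open>The heat equation holds only for \<open>t < T\<close>; the top edge is reached by continuity.\<close>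
    have "0 < T" using 4 by simp
    have "(r \<longlongrightarrow> r T) (at_left T)"
      using continuous_on_Icc_at_leftD[OF r(1) \<open>0 < T\<close>] .
    then have "eventually (\<lambda>\<tau>. x < r \<tau>) (at_left T)"
      using \<open>x < r T\<close> by (rule order_tendstoD)
    then have below: "eventually (\<lambda>\<tau>. 0 < \<tau> \<and> \<tau> < T \<and> x < r \<tau>) (at_left T)"
      using eventually_at_left_real[OF \<open>0 < T\<close>] by eventually_elim auto
    have "((\<lambda>\<tau>. (\<lambda>(x,t). V x t) (x, \<tau>)) \<longlongrightarrow> (\<lambda>(x,t). V x t) (x, T)) (at_left T)"
    proof (rule continuous_on_tendsto_compose[OF cont])
      show "((\<lambda>\<tau>. (x, \<tau>)) \<longlongrightarrow> (x, T)) (at_left T)"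
        by (intro tendsto_intros)
      show "(x, T) \<in> Qclos T r" using xt 4 by simp
      show "eventually (\<lambda>\<tau>. (x, \<tau>) \<in> Qclos T r) (at_left T)"
        using below by eventually_elim (use xt in \<open>auto simp: Qclos_def\<close>)
    qed
    then have "((\<lambda>\<tau>. V x \<tau>) \<longlongrightarrow> V x T) (at_left T)" by simp
    moreover have "eventually (\<lambda>\<tau>. 0 \<le> V x \<tau>) (at_left T)"
      using below by eventually_elim (use before_T xt in \<open>auto simp: Qclos_def\<close>)
    ultimately show ?thesis
      using 4 by (auto intro: tendsto_lowerbound)
  qed
qed

lemma boundary_fnD:
  assumes "boundary_fn T r"
  shows "continuous_on {0..T} r" and "r 0 = 0" and "\<forall>t\<in>{0..T}. 0 \<le> r t"
  using assms unfolding boundary_fn_def by (force simp: le_less)+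

lemma neumann_solD:
  assumes "neumann_sol T h r U" and "\<forall>t\<in>{0..T}. 0 \<le> r t"
  shows "continuous_on (Qclos T r) (\<lambda>(x,t). U x t)"
    and "solves_heat_on (Qdom T r) U"
    and "\<forall>t\<in>{0<..T}. ((\<lambda>y. U y t) has_real_derivative - h t) (at 0 within {0..r t})"
    and "U 0 0 = 0" and "\<forall>t\<in>{0..T}. U (r t) t = 0"
proof -
  obtain Ux Uxx Ut where
    cont: "continuous_on (Qclos T r) (\<lambda>(x,t). U x t)" and
    heat: "\<forall>(x,t)\<in>Qdom T r. ((\<lambda>y. U y t) has_real_derivative Ux x t) (at x) \<and>
            ((\<lambda>y. Ux y t) has_real_derivative Uxx x t) (at x) \<and>
            ((\<lambda>\<tau>. U x \<tau>) has_real_derivative Ut x t) (at t) \<and> Ut x t = Uxx x t" and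
    deriv: "\<forall>(x,t)\<in>Qclos T r - {(x,t). t = 0}.
            ((\<lambda>y. U y t) has_real_derivative Ux x t) (at x within {0..r t})" and
    flux: "\<forall>t\<in>{0<..T}. - Ux 0 t = h t" and
    boundary: "U 0 0 = 0" "\<forall>t\<in>{0..T}. U (r t) t = 0"
    using assms(1) unfolding neumann_sol_def by (elim conjE exE) (rule that; assumption)
  show "solves_heat_on (Qdom T r) U"
    unfolding solves_heat_on_def by (intro exI[of _ Ux] exI[of _ Uxx] exI[of _ Ut] heat)
  show "\<forall>t\<in>{0<..T}. ((\<lambda>y. U y t) has_real_derivative - h t) (at 0 within {0..r t})"
  proof
    fix t assume t: "t \<in> {0<..T}"
    then have "(0, t) \<in> Qclos T r - {(x,t). t = 0}"
      using assms(2) unfolding Qclos_def by auto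
    then have "((\<lambda>y. U y t) has_real_derivative Ux 0 t) (at 0 within {0..r t})"
      using deriv by fast
    moreover have "Ux 0 t = - h t" using bspec[OF flux t] by linarith
    ultimately show "((\<lambda>y. U y t) has_real_derivative - h t) (at 0 within {0..r t})"
      by simp
  qed
  show "continuous_on (Qclos T r) (\<lambda>(x,t). U x t)" by (fact cont)
  show "U 0 0 = 0" "\<forall>t\<in>{0..T}. U (r t) t = 0" by (fact boundary)+
qed

lemma neumann_sol_nonneg:
  assumes "\<forall>t\<in>{0<..T}. 0 < h t" and "neumann_sol T h r U" and "boundary_fn T r"
    and "(x, t) \<in> Qclos T r"
  shows "0 \<le> U x t"
proof -
  note r = boundary_fnD[OF assms(3)]
  note U = neumann_solD[OF assms(2) r(3)]
  show ?thesis
  proof (rule heat_min_principle[OF r(1,3) U(1,2) _ _ _ assms(4)])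
    show "\<forall>t\<in>{0<..T}. \<exists>D<0. ((\<lambda>y. U y t) has_real_derivative D) (at 0 within {0..r t})"
      using U(3) assms(1) by (metis neg_less_0_iff_less)
  qed (use U(4,5) r(2) in auto)
qed

theorem neumann_sol_mono:
  assumes hpos: "\<forall>t\<in>{0<..T}. 0 < h t"
    and sol1: "neumann_sol T h r1 U1" and bf1: "boundary_fn T r1"
    and sol2: "neumann_sol T h r2 U2" and bf2: "boundary_fn T r2"
    and le: "\<forall>t\<in>{0..T}. r1 t \<le> r2 t" and xt: "(x, t) \<in> Qclos T r1"
  shows "U1 x t \<le> U2 x t"
proof (rule field_le_epsilon)
  fix e :: real assume "0 < e"
  note r1 = boundary_fnD[OF bf1] and r2 = boundary_fnD[OF bf2]
  note u1 = neumann_solD[OF sol1 r1(3)] and u2 = neumann_solD[OF sol2 r2(3)]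
  have QQ: "Qclos T r1 \<subseteq> Qclos T r2" using le unfolding Qclos_def by (force intro: order_trans)
  have DD: "Qdom T r1 \<subseteq> Qdom T r2" using le unfolding Qdom_def by (force intro: less_le_trans)
  obtain B where B: "\<forall>t\<in>{0..T}. \<bar>r1 t\<bar> \<le> B"
    using compact_imp_bounded[OF compact_continuous_image[OF r1(1) compact_Icc]]
    unfolding bounded_real by auto
  define L where "L = \<bar>B\<bar>"
  define \<epsilon> where "\<epsilon> = e / (L + 1)"
  have "0 < \<epsilon>" using \<open>0 < e\<close> unfolding \<epsilon>_def L_def by simp
  define V where "V x t = U2 x t - U1 x t + (- \<epsilon>) * x + \<epsilon> * L" for x t
  text \<open>The term \<open>\<epsilon>(L - x)\<close> makes the outward derivative of \<open>U\<^sub>2 - U\<^sub>1\<close> strictly negative.\<close>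
  have "0 \<le> V x t"
  proof (rule heat_min_principle[OF r1(1,3) _ _ _ _ _ xt])
    show "continuous_on (Qclos T r1) (\<lambda>(x,t). V x t)"
      using continuous_on_subset[OF u2(1) QQ] u1(1) unfolding V_def case_prod_beta
      by (intro continuous_intros)
    show "solves_heat_on (Qdom T r1) V"
      unfolding V_def
      by (intro solves_heat_on_diff_affine u1(2) solves_heat_on_subset[OF u2(2) DD])
    show "\<forall>t\<in>{0<..T}. \<exists>D<0. ((\<lambda>y. V y t) has_real_derivative D) (at 0 within {0..r1 t})"
    proof
      fix t assume t: "t \<in> {0<..T}"
      have "((\<lambda>y. U2 y t) has_real_derivative - h t) (at 0 within {0..r2 t})"
        using u2(3) t by blast
      moreover have "{0..r1 t} \<subseteq> {0..r2 t}" using le t by auto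
      ultimately have d2: "((\<lambda>y. U2 y t) has_real_derivative - h t) (at 0 within {0..r1 t})"
        by (rule has_field_derivative_subset)
      have d1: "((\<lambda>y. U1 y t) has_real_derivative - h t) (at 0 within {0..r1 t})"
        using u1(3) t by blast
      have "((\<lambda>y. U2 y t - U1 y t + (- \<epsilon>) * y + \<epsilon> * L) has_real_derivative
          - h t - - h t + - \<epsilon> * 1 + 0) (at 0 within {0..r1 t})"
        by (rule DERIV_add[OF DERIV_add[OF DERIV_diff[OF d2 d1] DERIV_cmult[OF DERIV_ident]] DERIV_const])
      then have "((\<lambda>y. V y t) has_real_derivative - \<epsilon>) (at 0 within {0..r1 t})"
        by (simp add: V_def)
      then show "\<exists>D<0. ((\<lambda>y. V y t) has_real_derivative D) (at 0 within {0..r1 t})"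
        using \<open>0 < \<epsilon>\<close> by (intro exI[of _ "- \<epsilon>"]) simp
    qed
    show "\<forall>x\<in>{0..r1 0}. 0 \<le> V x 0"
      using u1(4) u2(4) r1(2) \<open>0 < \<epsilon>\<close> unfolding V_def L_def by auto
    show "\<forall>t\<in>{0..T}. 0 \<le> V (r1 t) t"
    proof
      fix t assume t: "t \<in> {0..T}"
      have "(r1 t, t) \<in> Qclos T r2"
        using le r1(3) t unfolding Qclos_def by auto
      then have "0 \<le> U2 (r1 t) t"
        by (rule neumann_sol_nonneg[OF hpos sol2 bf2])
      moreover have "r1 t \<le> L" using B t unfolding L_def by force
      then have "\<epsilon> * r1 t \<le> \<epsilon> * L" using \<open>0 < \<epsilon>\<close> by simp
      ultimately show "0 \<le> V (r1 t) t"
        using u1(5) t unfolding V_def by (simp add: algebra_simps)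
    qed
  qed
  moreover have "\<epsilon> * L \<le> e"
    using \<open>0 < e\<close> unfolding \<epsilon>_def L_def by (simp add: field_simps)
  moreover have "0 \<le> \<epsilon> * x" using \<open>0 < \<epsilon>\<close> xt unfolding Qclos_def by simp
  ultimately show "U1 x t \<le> U2 x t + e"
    unfolding V_def by linarith
qed

lemma integral_le_extend:
  fixes f g :: "real \<Rightarrow> real"
  assumes "c \<le> a" "a \<le> b" "continuous_on {c..a} f" "continuous_on {c..b} g"
    and "\<forall>x\<in>{c..a}. f x \<le> g x" and "\<forall>x\<in>{a..b}. 0 \<le> g x"
  shows "integral {c..a} f \<le> integral {c..b} g"
proof -
  have g: "g integrable_on {c..b}" using assms(4) by (rule integrable_continuous_interval)
  have "integral {c..a} f \<le> integral {c..a} g"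
  proof (rule integral_le)
    show "f integrable_on {c..a}" using assms(3) by (rule integrable_continuous_interval)
    show "g integrable_on {c..a}" using integrable_on_subinterval[OF g] assms(2) by simp
  qed (use assms(5) in simp)
  also have "\<dots> \<le> integral {c..a} g + integral {a..b} g"
    using assms(1,6) integrable_on_subinterval[OF g] by (intro add_increasing2 integral_nonneg) auto
  also have "\<dots> = integral {c..b} g"
    using assms(1,2) g by (rule Henstock_Kurzweil_Integration.integral_combine)
  finally show ?thesis .
qed

lemma continuous_on_slice:
  assumes "continuous_on S (\<lambda>(x,t). U x t)" and "\<forall>x\<in>A. (x, t) \<in> S"
  shows "continuous_on A (\<lambda>x. U x t)"
proof -
  have "continuous_on A (\<lambda>x. (x, t))" by (intro continuous_intros)
  moreover have "(\<lambda>x. (x, t)) ` A \<subseteq> S" using assms(2) by auto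
  ultimately have "continuous_on A (\<lambda>x. (\<lambda>(x,t). U x t) (x, t))"
    by (rule continuous_on_compose2[OF assms(1)])
  then show ?thesis by simp
qed

theorem nbu_antimono:
  assumes hpos: "\<forall>t\<in>{0<..T}. 0 < h t"
    and "neumann_sol T h r1 (U r1)" "boundary_fn T r1"
    and "neumann_sol T h r2 (U r2)" "boundary_fn T r2"
    and le: "\<forall>t\<in>{0..T}. r1 t \<le> r2 t" and t: "t \<in> {0..T}"
  shows "nbu h U r2 t \<le> nbu h U r1 t"
proof -
  note r1 = boundary_fnD[OF assms(3)] and r2 = boundary_fnD[OF assms(5)]
  have "integral {0..r1 t} (\<lambda>x. U r1 x t) \<le> integral {0..r2 t} (\<lambda>x. U r2 x t)"
  proof (rule integral_le_extend)
    show "continuous_on {0..r1 t} (\<lambda>x. U r1 x t)"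
      by (rule continuous_on_slice[OF neumann_solD(1)[OF assms(2) r1(3)]])
        (use t in \<open>auto simp: Qclos_def\<close>)
    show "continuous_on {0..r2 t} (\<lambda>x. U r2 x t)"
      by (rule continuous_on_slice[OF neumann_solD(1)[OF assms(4) r2(3)]])
        (use t in \<open>auto simp: Qclos_def\<close>)
    show "\<forall>x\<in>{0..r1 t}. U r1 x t \<le> U r2 x t"
    proof
      fix x assume "x \<in> {0..r1 t}"
      then have "(x, t) \<in> Qclos T r1" using t by (auto simp: Qclos_def)
      then show "U r1 x t \<le> U r2 x t" by (rule neumann_sol_mono[OF hpos assms(2-5) le])
    qed
    show "\<forall>x\<in>{r1 t..r2 t}. 0 \<le> U r2 x t"
    proof
      fix x assume "x \<in> {r1 t..r2 t}"
      moreover have "0 \<le> r1 t" using r1(3) t by blast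
      ultimately have "(x, t) \<in> Qclos T r2" using t by (auto simp: Qclos_def)
      then show "0 \<le> U r2 x t" by (rule neumann_sol_nonneg[OF hpos assms(4,5)])
    qed
  qed (use r1(3) le t in auto)
  then show ?thesis unfolding nbu_def by simp
qed

theorem mainTheorem2:
  fixes T :: real and h :: "real \<Rightarrow> real"
    and U :: "(real \<Rightarrow> real) \<Rightarrow> real \<Rightarrow> real \<Rightarrow> real"
    and sstar s :: "real \<Rightarrow> real"
  assumes "T > 0"
    and "continuous_on {0..T} h" and "\<forall>t\<in>{0..T}. h t > 0"
    and "\<forall>r. boundary_fn T r \<longrightarrow> neumann_sol T h r (U r)"
    and "boundary_fn T sstar"
    and "\<forall>t\<in>{0..T}. nbu h U sstar t = sstar t"
    and "boundary_fn T s"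
  shows "((\<forall>t\<in>{0..T}. s t \<le> sstar t) \<longrightarrow>
           (\<forall>t\<in>{0..T}.
              s t - sstar t \<le> (s t - sstar t) / 2 \<and>
              (s t - sstar t) / 2 \<le> ((1/2) * nbu h U s t + (1/2) * s t) - sstar t \<and>
              ((1/2) * nbu h U s t + (1/2) * s t) - sstar t \<le> (nbu h U s t - sstar t) / 2 \<and>
              (nbu h U s t - sstar t) / 2 \<le> nbu h U s t - sstar t))
       \<and> ((\<forall>t\<in>{0..T}. s t \<ge> sstar t) \<longrightarrow>
           (\<forall>t\<in>{0..T}.
              s t - sstar t \<ge> (s t - sstar t) / 2 \<and>
              (s t - sstar t) / 2 \<ge> ((1/2) * nbu h U s t + (1/2) * s t) - sstar t \<and>
              ((1/2) * nbu h U s t + (1/2) * s t) - sstar t \<ge> (nbu h U s t - sstar t) / 2 \<and>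
              (nbu h U s t - sstar t) / 2 \<ge> nbu h U s t - sstar t))"
proof -
  have hpos: "\<forall>t\<in>{0<..T}. 0 < h t" using assms(3) by auto
  have sol_s: "neumann_sol T h s (U s)" and sol_star: "neumann_sol T h sstar (U sstar)"
    using assms(4,5,7) by auto
  have le_case: "s t \<le> sstar t \<and> sstar t \<le> nbu h U s t"
    if "\<forall>t\<in>{0..T}. s t \<le> sstar t" "t \<in> {0..T}" for t
    using nbu_antimono[OF hpos sol_s assms(7) sol_star assms(5)] that assms(6) by auto
  have ge_case: "sstar t \<le> s t \<and> nbu h U s t \<le> sstar t"
    if "\<forall>t\<in>{0..T}. sstar t \<le> s t" "t \<in> {0..T}" for t
    using nbu_antimono[OF hpos sol_star assms(5) sol_s assms(7)] that assms(6) by auto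
  show ?thesis
    by (intro conjI impI ballI; (drule (1) le_case | drule (1) ge_case); argo)
qed

end
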